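(* $E_3\leq_{\mathrm{Learn}}\mathbf{PL}$: every $E_3$-learnable family of structures is $\mathbf{PL}$-learnable.
   Context: All structures are countable, have domain $\mathbb{N}$, are in a finite relational signature, and are identified with their atomic diagrams (elements of $2^{\mathbb{N}}$). A family of structures $\mathfrak{K}$ is a countable set of pairwise nonisomorphic such structures; $\mathcal{S}\restriction_s$ is the finite substructure on $\{0,\dots,s\}$; $\mathrm{LD}(\mathfrak{K})\subseteq2^{\mathbb{N}}$ is the set of structures with domain $\mathbb{N}$ isomorphic to a member of $\mathfrak{K}$ (subspace topology). For an equivalence relation $E$ on a space $X$, $\mathfrak{K}$ is $E$-learnable if there is a continuous $\Gamma:\mathrm{LD}(\mathfrak{K})\to X$ with $\mathcal{S}\cong\mathcal{S}'\iff\Gamma(\mathcal{S})E\Gamma(\mathcal{S}')$ on $\mathrm{LD}(\mathfrak{K})$. Fix a computable bijection $\langle\cdot,\cdot\rangle:\mathbb{N}^2\to\mathbb{N}$; for $p\in\mathbb{N}^{\mathbb{N}\times\mathbb{N}}$ let $p^{[m]}(n)=p(\langle m,n\rangle)$; $p\,E_0\,q$ (for $p,q\in\mathbb{N}^{\mathbb{N}}$) iff $\exists m\forall n\ge m\ p(n)=q(n)$; $p\,E_3\,q$ iff $\forall m\ p^{[m]}E_0q^{[m]}$. A learner is an arbitrary function from $\{\mathcal{S}\restriction_s:\mathcal{S}\in\mathrm{LD}(\mathfrak{K})\}$ to $\{\ulcorner\mathcal{A}\urcorner:\mathcal{A}\in\mathfrak{K}\}\cup\{?\}$. $\mathfrak{K}$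 is $\mathbf{PL}$-learnable if some learner $\mathbf{M}$ satisfies: for every $\mathcal{S}\in\mathrm{LD}(\mathfrak{K})$ and $\mathcal{A}\in\mathfrak{K}$, $\{n:\mathbf{M}(\mathcal{S}\restriction_n)=\ulcorner\mathcal{A}\urcorner\}$ is infinite iff $\mathcal{A}\cong\mathcal{S}$. *)

theory Defs
  imports "HOL-Analysis.Analysis" "HOL-Library.Nat_Bijection"
begin

text \<open>A finite relational signature is a list of arities: relation symbol i (for i < length sig)
has arity sig ! i. Atoms that are not well-formed for the signature are required to be False,
so that the set of diagrams is (homeomorphic to) Cantor space 2^N.\<close>

type_synonym diag = "nat \<times> nat list \<Rightarrow> bool"

definition wf_atom :: "nat list \<Rightarrow> nat \<times> nat list \<Rightarrow> bool" where
  "wf_atom sig a \<longleftrightarrow> fst a < length sig \<and> length (snd a) = sig ! fst a"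

definition is_structure :: "nat list \<Rightarrow> diag \<Rightarrow> bool" where
  "is_structure sig S \<longleftrightarrow> (\<forall>a. \<not> wf_atom sig a \<longrightarrow> \<not> S a)"

definition iso :: "nat list \<Rightarrow> diag \<Rightarrow> diag \<Rightarrow> bool" where
  "iso sig S T \<longleftrightarrow> (\<exists>f::nat \<Rightarrow> nat. bij f \<and>
     (\<forall>i xs. wf_atom sig (i, xs) \<longrightarrow> (S (i, xs) \<longleftrightarrow> T (i, map f xs))))"

definition family :: "nat list \<Rightarrow> diag set \<Rightarrow> bool" where
  "family sig K \<longleftrightarrow> countable K \<and> (\<forall>A\<in>K. is_structure sig A) \<and>
     (\<forall>A\<in>K. \<forall>B\<in>K. iso sig A B \<longrightarrow> A = B)"

definition LD :: "nat list \<Rightarrow> diag set \<Rightarrow> diag set" where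
  "LD sig K = {S. is_structure sig S \<and> (\<exists>A\<in>K. iso sig S A)}"

definition cantor_top :: "diag topology" where
  "cantor_top = product_topology (\<lambda>_. discrete_topology UNIV) UNIV"

definition baire_top :: "(nat \<Rightarrow> nat) topology" where
  "baire_top = product_topology (\<lambda>_. discrete_topology UNIV) UNIV"

definition E0 :: "(nat \<Rightarrow> nat) \<Rightarrow> (nat \<Rightarrow> nat) \<Rightarrow> bool" where
  "E0 p q \<longleftrightarrow> (\<exists>m. \<forall>n\<ge>m. p n = q n)"

definition column :: "(nat \<Rightarrow> nat) \<Rightarrow> nat \<Rightarrow> nat \<Rightarrow> nat" where
  "column p m n = p (prod_encode (m, n))"

definition E3 :: "(nat \<Rightarrow> nat) \<Rightarrow> (nat \<Rightarrow> nat) \<Rightarrow> bool" where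
  "E3 p q \<longleftrightarrow> (\<forall>m. E0 (column p m) (column q m))"

definition E3_learnable :: "nat list \<Rightarrow> diag set \<Rightarrow> bool" where
  "E3_learnable sig K \<longleftrightarrow> (\<exists>\<Gamma> :: diag \<Rightarrow> (nat \<Rightarrow> nat).
     continuous_map (subtopology cantor_top (LD sig K)) baire_top \<Gamma> \<and>
     (\<forall>S\<in>LD sig K. \<forall>T\<in>LD sig K. iso sig S T \<longleftrightarrow> E3 (\<Gamma> S) (\<Gamma> T)))"

definition restr :: "diag \<Rightarrow> nat \<Rightarrow> nat \<times> diag" where
  "restr S s = (s, \<lambda>a. set (snd a) \<subseteq> {..s} \<and> S a)"

text \<open>A learner outputs Some A (the code of A \<in> K) or None (the symbol ?).\<close>
definition PL_learnable :: "nat list \<Rightarrow> diag set \<Rightarrow> bool" where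
  "PL_learnable sig K \<longleftrightarrow> (\<exists>M :: nat \<times> diag \<Rightarrow> diag option.
     (\<forall>S\<in>LD sig K. \<forall>s. M (restr S s) \<in> Some ` K \<union> {None}) \<and>
     (\<forall>S\<in>LD sig K. \<forall>A\<in>K.
        infinite {n. M (restr S n) = Some A} \<longleftrightarrow> iso sig A S))"

end

theory Submission
  imports Defs
begin

text \<open>Let \<Gamma> reduce isomorphism on LD(K) to E3 and let A_i enumerate K. For i \<noteq> j the
  codes \<Gamma> A_i and \<Gamma> A_j differ infinitely often in some column. By continuity, a
  finite piece of S forces more and more values of \<Gamma> S, so we can count the positions of that
  column at which \<Gamma> S is already known to differ from \<Gamma> A_i. If S \<cong> A_i, this count stays
  bounded, whereas the count against A_j on the column separating j from i grows without bound:
  eventually i beats every j. The learner gives each index a budget, its rank (the least index it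
  does not currently beat), and always outputs the least index that has not used up its budget.
  The rank of the true index tends to infinity, so it is output infinitely often; the rank of any
  other index is eventually bounded by the true one, so that index is output only finitely often.\<close>

lemma fst_restr [simp]: "fst (restr S s) = s"
  unfolding restr_def by simp

lemma restr_restr: "t \<le> s \<Longrightarrow> restr (snd (restr S s)) t = restr S t"
  unfolding restr_def by (auto intro!: ext)

lemma restr_eqD:
  assumes "restr S s = restr T s" and "set (snd a) \<subseteq> {..s}"
  shows "S a = T a"
  using fun_cong[OF arg_cong[OF assms(1), of snd], of a] assms(2) unfolding restr_def by simp

lemma restr_eq_mono:
  assumes "restr S s' = restr T s'" and "s \<le> s'"
  shows "restr S s = restr T s"
  using restr_eqD[OF assms(1)] assms(2) unfolding restr_def by fastforce

lemma iso_refl: "iso sig S S"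
  unfolding iso_def by (rule exI[of _ id]) simp

lemma iso_sym:
  assumes "iso sig S T"
  shows "iso sig T S"
proof -
  obtain f where f: "bij f" and eq: "\<And>i xs. wf_atom sig (i, xs) \<Longrightarrow> S (i, xs) \<longleftrightarrow> T (i, map f xs)"
    using assms unfolding iso_def by blast
  have "T (i, ys) \<longleftrightarrow> S (i, map (inv f) ys)" if "wf_atom sig (i, ys)" for i ys
    using eq[of i "map (inv f) ys"] that f
    by (simp add: wf_atom_def map_idI bij_is_surj surj_f_inv_f)
  then show ?thesis
    unfolding iso_def using bij_imp_bij_inv[OF f] by blast
qed

lemma E0_sym: "E0 p q \<Longrightarrow> E0 q p"
  unfolding E0_def by metis

lemma E0_trans: "E0 p q \<Longrightarrow> E0 q r \<Longrightarrow> E0 p r"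
  unfolding E0_def by (metis max.cobounded1 max.cobounded2 order_trans)

lemma finite_nat_set_iff_eventually_not:
  "finite {n::nat. P n} \<longleftrightarrow> (\<forall>\<^sub>F n in sequentially. \<not> P n)"
  by (simp add: eventually_cofinite flip: cofinite_eq_sequentially)

locale continuous_on_diagrams =
  fixes L :: "diag set" and \<Gamma> :: "diag \<Rightarrow> nat \<Rightarrow> nat"
  assumes continuous: "continuous_map (subtopology cantor_top L) baire_top \<Gamma>"
begin

lemma locally_determined:
  assumes S: "S \<in> L"
  shows "\<exists>s. \<forall>S'\<in>L. restr S' s = restr S s \<longrightarrow> \<Gamma> S' x = \<Gamma> S x"
proof -
  have "continuous_map baire_top (discrete_topology UNIV) (\<lambda>f. f x)"
    unfolding baire_top_def by (rule continuous_map_product_projection) simp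
  then have coord: "continuous_map (subtopology cantor_top L) (discrete_topology UNIV) (\<lambda>S. \<Gamma> S x)"
    using continuous_map_compose[OF continuous] by (simp add: o_def)
  have topspace: "topspace (subtopology cantor_top L) = L"
    unfolding cantor_top_def by (simp add: PiE_UNIV_domain)
  have "openin (subtopology cantor_top L)
      {S' \<in> topspace (subtopology cantor_top L). \<Gamma> S' x \<in> {\<Gamma> S x}}"
    by (rule openin_continuous_map_preimage[OF coord]) simp
  then obtain U where U: "openin cantor_top U" and fibre: "{S' \<in> L. \<Gamma> S' x = \<Gamma> S x} = U \<inter> L"
    unfolding topspace openin_subtopology by auto
  have "S \<in> U" using fibre S by blast
  then obtain V where fin: "finite {a. V a \<noteq> UNIV}" and "S \<in> Pi\<^sub>E UNIV V" and "Pi\<^sub>E UNIV V \<subseteq> U"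
    using U unfolding cantor_top_def openin_product_topology_alt by auto
  then have S_V: "\<And>a. S a \<in> V a" and V_U: "\<And>S'. (\<And>a. S' a \<in> V a) \<Longrightarrow> S' \<in> U"
    by (auto simp: PiE_UNIV_domain)
  \<comment> \<open>the basic open set constrains only finitely many atoms; s bounds all their elements\<close>
  define s where "s = Max (insert 0 (\<Union>a\<in>{a. V a \<noteq> UNIV}. set (snd a)))"
  have constrained_atoms: "set (snd a) \<subseteq> {..s}" if "V a \<noteq> UNIV" for a
    using fin that unfolding s_def by (auto intro: Max_ge)
  have "\<Gamma> S' x = \<Gamma> S x" if "S' \<in> L" and "restr S' s = restr S s" for S'
  proof -
    have "S' a \<in> V a" for a
      using S_V restr_eqD[OF \<open>restr S' s = restr S s\<close> constrained_atoms] by (cases "V a = UNIV") auto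
    then show ?thesis using V_U fibre \<open>S' \<in> L\<close> by blast
  qed
  then show ?thesis by blast
qed

definition determines :: "nat \<times> diag \<Rightarrow> nat \<Rightarrow> nat \<Rightarrow> bool" where
  "determines \<sigma> x v \<longleftrightarrow> (\<forall>S\<in>L. restr S (fst \<sigma>) = \<sigma> \<longrightarrow> \<Gamma> S x = v)"

lemma determines_restrD: "S \<in> L \<Longrightarrow> determines (restr S s) x v \<Longrightarrow> v = \<Gamma> S x"
  unfolding determines_def by auto

lemma eventually_determines:
  assumes "S \<in> L"
  shows "\<forall>\<^sub>F s in sequentially. determines (restr S s) x (\<Gamma> S x)"
proof -
  obtain s0 where s0: "\<forall>S'\<in>L. restr S' s0 = restr S s0 \<longrightarrow> \<Gamma> S' x = \<Gamma> S x"
    using locally_determined[OF assms] by blast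
  have "determines (restr S s) x (\<Gamma> S x)" if "s0 \<le> s" for s
    unfolding determines_def fst_restr using s0 restr_eq_mono[OF _ that] by blast
  then show ?thesis unfolding eventually_sequentially by blast
qed

definition disagreements :: "nat \<times> diag \<Rightarrow> (nat \<Rightarrow> nat) \<Rightarrow> nat \<Rightarrow> nat" where
  "disagreements \<sigma> q m = card {n. n < fst \<sigma> \<and>
     (\<exists>v. determines \<sigma> (prod_encode (m, n)) v \<and> v \<noteq> column q m n)}"

lemma disagreements_bounded:
  assumes S: "S \<in> L" and "E0 (column (\<Gamma> S) m) (column q m)"
  shows "\<exists>B. \<forall>s. disagreements (restr S s) q m \<le> B"
proof -
  obtain B where B: "\<forall>n\<ge>B. column (\<Gamma> S) m n = column q m n"
    using assms(2) unfolding E0_def by blast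
  have "{n. n < s \<and> (\<exists>v. determines (restr S s) (prod_encode (m, n)) v \<and> v \<noteq> column q m n)}
      \<subseteq> {..<B}" for s
  proof (intro subsetI, elim CollectE conjE exE)
    fix n v assume "determines (restr S s) (prod_encode (m, n)) v" and "v \<noteq> column q m n"
    then have "column (\<Gamma> S) m n \<noteq> column q m n"
      using determines_restrD[OF S] unfolding column_def by blast
    then show "n \<in> {..<B}" using B by (meson lessThan_iff not_le)
  qed
  then have "disagreements (restr S s) q m \<le> card {..<B}" for s
    unfolding disagreements_def fst_restr by (rule card_mono[OF finite_lessThan])
  then show ?thesis by auto
qed

lemma eventually_disagreements_ge:
  assumes S: "S \<in> L" and "\<not> E0 (column (\<Gamma> S) m) (column q m)"
  shows "\<forall>\<^sub>F s in sequentially. B \<le> disagreements (restr S s) q m"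
proof -
  have "infinite {n. column (\<Gamma> S) m n \<noteq> column q m n}"
    using assms(2) unfolding E0_def finite_nat_set_iff_eventually_not eventually_sequentially by simp
  then obtain Z where Z: "finite Z" "card Z = B" "Z \<subseteq> {n. column (\<Gamma> S) m n \<noteq> column q m n}"
    using infinite_arbitrarily_large by blast
  have "\<forall>\<^sub>F s in sequentially.
      \<forall>n\<in>Z. n < s \<and> determines (restr S s) (prod_encode (m, n)) (column (\<Gamma> S) m n)"
    using Z(1) unfolding column_def
    by (intro eventually_ball_finite ballI eventually_conj eventually_gt_at_top eventually_determines S)
  then show ?thesis
  proof (rule eventually_mono)
    fix s
    assume "\<forall>n\<in>Z. n < s \<and> determines (restr S s) (prod_encode (m, n)) (column (\<Gamma> S) m n)"
    then have "Z \<subseteq> {n. n < s \<and> (\<exists>v. determines (restr S s) (prod_encode (m, n)) v \<and> v \<noteq> column q m n)}"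
      using Z(3) by blast
    moreover have "finite {n. n < s \<and> (\<exists>v. determines (restr S s) (prod_encode (m, n)) v \<and> v \<noteq> column q m n)}"
      by simp
    ultimately show "B \<le> disagreements (restr S s) q m"
      unfolding disagreements_def fst_restr using Z(2) card_mono by blast
  qed
qed

lemma eventually_disagreements_less:
  assumes "S \<in> L" and "E0 (column (\<Gamma> S) m) (column q m)"
    and "\<not> E0 (column (\<Gamma> S) m') (column q' m')"
  shows "\<forall>\<^sub>F s in sequentially. disagreements (restr S s) q m < disagreements (restr S s) q' m'"
proof -
  obtain B where B: "\<forall>s. disagreements (restr S s) q m \<le> B"
    using disagreements_bounded assms(1,2) by blast
  show ?thesis
    using eventually_disagreements_ge[OF assms(1,3), of "Suc B"]
    by (rule eventually_mono) (meson B Suc_le_lessD le_less_trans)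
qed

end

locale dominance_learner =
  fixes I :: "nat set" and beats :: "nat \<times> diag \<Rightarrow> nat \<Rightarrow> nat \<Rightarrow> bool"
  assumes beats_asym: "beats \<sigma> i j \<Longrightarrow> \<not> beats \<sigma> j i"
begin

text \<open>The disjunct j = fst \<sigma> caps the rank at the current stage and keeps the LEAST well defined.\<close>

definition dom_rank :: "nat \<times> diag \<Rightarrow> nat \<Rightarrow> nat" where
  "dom_rank \<sigma> i = (LEAST j. j = fst \<sigma> \<or> (j \<in> I \<and> j \<noteq> i \<and> \<not> beats \<sigma> i j))"

definition eligible :: "nat \<times> diag \<Rightarrow> (nat \<Rightarrow> nat) \<Rightarrow> nat \<Rightarrow> bool" where
  "eligible \<sigma> c i \<longleftrightarrow> i \<in> I \<and> i \<le> fst \<sigma> \<and> c i < dom_rank \<sigma> i"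

definition next_guess :: "nat \<times> diag \<Rightarrow> (nat \<Rightarrow> nat) \<Rightarrow> nat option" where
  "next_guess \<sigma> c = (if \<exists>i. eligible \<sigma> c i then Some (LEAST i. eligible \<sigma> c i) else None)"

primrec guess_count :: "diag \<Rightarrow> nat \<Rightarrow> nat \<Rightarrow> nat" where
  "guess_count S 0 = (\<lambda>_. 0)"
| "guess_count S (Suc s) = (case next_guess (restr S s) (guess_count S s) of
      None \<Rightarrow> guess_count S s
    | Some i \<Rightarrow> (guess_count S s)(i := Suc (guess_count S s i)))"

definition guess :: "diag \<Rightarrow> nat \<Rightarrow> nat option" where
  "guess S s = next_guess (restr S s) (guess_count S s)"

definition learner :: "nat \<times> diag \<Rightarrow> nat option" where
  "learner \<sigma> = next_guess \<sigma> (guess_count (snd \<sigma>) (fst \<sigma>))"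

definition dominant :: "diag \<Rightarrow> nat \<Rightarrow> bool" where
  "dominant S i \<longleftrightarrow> i \<in> I \<and>
     (\<forall>j\<in>I. j \<noteq> i \<longrightarrow> (\<forall>\<^sub>F s in sequentially. beats (restr S s) i j))"

lemma guess_count_restr: "t \<le> s \<Longrightarrow> guess_count (snd (restr S s)) t = guess_count S t"
  by (induction t) (simp_all add: restr_restr split: option.split)

lemma learner_restr: "learner (restr S s) = guess S s"
  unfolding learner_def guess_def by (simp add: guess_count_restr)

lemma guess_SomeD: "guess S s = Some k \<Longrightarrow> eligible (restr S s) (guess_count S s) k"
  unfolding guess_def next_guess_def by (auto split: if_splits intro: LeastI_ex)

lemma guess_in_I: "guess S s = Some k \<Longrightarrow> k \<in> I"
  using guess_SomeD eligible_def by blast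

lemma guess_le_eligible:
  assumes "eligible (restr S s) (guess_count S s) i"
  shows "\<exists>k\<le>i. guess S s = Some k"
  using assms Least_le[of "eligible (restr S s) (guess_count S s)" i]
  unfolding guess_def next_guess_def by auto

lemma guess_count_Suc:
  "guess_count S (Suc s) k = (if guess S s = Some k then Suc (guess_count S s k) else guess_count S s k)"
  unfolding guess_def by (auto split: option.split)

declare guess_count.simps(2) [simp del]

lemma guess_count_mono: "s \<le> t \<Longrightarrow> guess_count S s k \<le> guess_count S t k"
  by (rule lift_Suc_mono_le[of "\<lambda>s. guess_count S s k"]) (simp_all add: guess_count_Suc)

lemma guess_count_unbounded:
  assumes "infinite {s. guess S s = Some k}"
  shows "\<exists>s. B \<le> guess_count S s k"
proof (induction B)
  case 0
  show ?case by simp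
next
  case (Suc B)
  then obtain s where "B \<le> guess_count S s k" by blast
  moreover obtain t where "s \<le> t" and "guess S t = Some k"
    using assms unfolding infinite_nat_iff_unbounded_le by blast
  ultimately have "Suc B \<le> guess_count S (Suc t) k"
    using guess_count_mono[of s t S k] by (simp add: guess_count_Suc)
  then show ?case by blast
qed

lemma eventually_dom_rank_ge:
  assumes "dominant S i"
  shows "\<forall>\<^sub>F s in sequentially. N \<le> dom_rank (restr S s) i"
proof -
  have "\<forall>\<^sub>F s in sequentially. N \<le> s \<and> (\<forall>j\<in>{..<N}. j \<in> I \<longrightarrow> j \<noteq> i \<longrightarrow> beats (restr S s) i j)"
    using assms unfolding dominant_def
    by (intro eventually_conj eventually_ge_at_top eventually_ball_finite) auto
  then show ?thesis
  proof (rule eventually_mono)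
    fix s assume s: "N \<le> s \<and> (\<forall>j\<in>{..<N}. j \<in> I \<longrightarrow> j \<noteq> i \<longrightarrow> beats (restr S s) i j)"
    let ?r = "dom_rank (restr S s) i"
    have "?r = s \<or> (?r \<in> I \<and> ?r \<noteq> i \<and> \<not> beats (restr S s) i ?r)"
      unfolding dom_rank_def fst_restr by (rule LeastI[of _ s]) simp
    then show "N \<le> ?r"
    proof
      assume "?r = s"
      then show ?thesis using s by simp
    next
      assume "?r \<in> I \<and> ?r \<noteq> i \<and> \<not> beats (restr S s) i ?r"
      then show ?thesis using s by (meson lessThan_iff not_le)
    qed
  qed
qed

lemma eventually_dom_rank_le:
  assumes "dominant S i" and "k \<in> I" and "k \<noteq> i"
  shows "\<forall>\<^sub>F s in sequentially. dom_rank (restr S s) k \<le> i"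
proof -
  have "\<forall>\<^sub>F s in sequentially. beats (restr S s) i k"
    using assms unfolding dominant_def by blast
  then show ?thesis
  proof (rule eventually_mono)
    fix s assume "beats (restr S s) i k"
    then have "\<not> beats (restr S s) k i" by (rule beats_asym)
    then show "dom_rank (restr S s) k \<le> i"
      using assms unfolding dom_rank_def dominant_def by (intro Least_le) auto
  qed
qed

lemma finite_guesses_of_other:
  assumes dom: "dominant S i" and "k \<noteq> i"
  shows "finite {s. guess S s = Some k}"
proof (rule ccontr)
  assume inf: "infinite {s. guess S s = Some k}"
  then obtain s1 where "guess S s1 = Some k" by (metis (mono_tags) empty_Collect_eq finite.emptyI)
  then have "k \<in> I" by (rule guess_in_I)
  obtain T where T: "\<forall>s\<ge>T. dom_rank (restr S s) k \<le> i"
    using eventually_dom_rank_le[OF dom \<open>k \<in> I\<close> \<open>k \<noteq> i\<close>] unfolding eventually_sequentially by blast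
  obtain s0 where s0: "Suc i \<le> guess_count S s0 k"
    using guess_count_unbounded[OF inf] by blast
  obtain t where t: "max s0 T \<le> t" "guess S t = Some k"
    using inf unfolding infinite_nat_iff_unbounded_le by blast
  have "Suc i \<le> guess_count S t k" using s0 guess_count_mono[of s0 t S k] t(1) by simp
  also have "\<dots> < dom_rank (restr S t) k" using guess_SomeD[OF t(2)] unfolding eligible_def by blast
  also have "\<dots> \<le> i" using T t(1) by simp
  finally show False by simp
qed

lemma infinite_guesses_of_dominant:
  assumes dom: "dominant S i"
  shows "infinite {s. guess S s = Some i}"
proof
  assume "finite {s. guess S s = Some i}"
  then obtain T where T: "\<forall>s\<ge>T. guess S s \<noteq> Some i"
    unfolding finite_nat_set_iff_eventually_not eventually_sequentially by blast
  have frozen: "guess_count S s i = guess_count S T i" if "T \<le> s" for s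
    using that by (induction s rule: dec_induct) (simp_all add: T guess_count_Suc)
  have "\<forall>\<^sub>F s in sequentially. \<forall>k\<in>{..<i}. guess S s \<noteq> Some k"
    using finite_guesses_of_other[OF dom] unfolding finite_nat_set_iff_eventually_not
    by (intro eventually_ball_finite) auto
  moreover have "\<forall>\<^sub>F s in sequentially. Suc (guess_count S T i) \<le> dom_rank (restr S s) i"
    by (rule eventually_dom_rank_ge[OF dom])
  moreover have "\<forall>\<^sub>F s in sequentially. max T i \<le> s"
    by (rule eventually_ge_at_top)
  ultimately have "\<forall>\<^sub>F s in sequentially. (\<forall>k\<in>{..<i}. guess S s \<noteq> Some k) \<and>
      Suc (guess_count S T i) \<le> dom_rank (restr S s) i \<and> max T i \<le> s"
    by (intro eventually_conj)
  then obtain s where s: "\<And>t. s \<le> t \<Longrightarrow> (\<forall>k\<in>{..<i}. guess S t \<noteq> Some k) \<and>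
      Suc (guess_count S T i) \<le> dom_rank (restr S t) i \<and> max T i \<le> t"
    unfolding eventually_sequentially by blast
  then have no_smaller: "\<forall>k\<in>{..<i}. guess S s \<noteq> Some k"
    and rank: "Suc (guess_count S T i) \<le> dom_rank (restr S s) i" and "T \<le> s" "i \<le> s"
    using order_refl by simp_all
  have "guess_count S s i < dom_rank (restr S s) i"
    using frozen[OF \<open>T \<le> s\<close>] rank by simp
  then have "eligible (restr S s) (guess_count S s) i"
    using dom \<open>i \<le> s\<close> unfolding dominant_def eligible_def by simp
  then obtain k where "k \<le> i" "guess S s = Some k" using guess_le_eligible by blast
  then show False using T \<open>T \<le> s\<close> no_smaller by (cases "k = i") auto
qed

lemma PL_learnable_if_dominant:
  assumes K: "countable K" and I: "I = to_nat_on K ` K"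
    and dominant_if_iso: "\<And>S A. S \<in> LD sig K \<Longrightarrow> A \<in> K \<Longrightarrow> iso sig A S \<Longrightarrow> dominant S (to_nat_on K A)"
  shows "PL_learnable sig K"
proof -
  define M where "M \<sigma> = map_option (from_nat_into K) (learner \<sigma>)" for \<sigma>
  have decode: "from_nat_into K k \<in> K \<and> to_nat_on K (from_nat_into K k) = k"
    if "guess S s = Some k" for S s k
    using guess_in_I[OF that] K unfolding I by (auto simp: from_nat_into_to_nat_on)
  have M_eq: "M (restr S n) = Some A \<longleftrightarrow> guess S n = Some (to_nat_on K A)" if "A \<in> K" for S n A
    using decode[of S n] that K by (cases "guess S n") (auto simp: M_def learner_restr from_nat_into_to_nat_on)
  show ?thesis unfolding PL_learnable_def
  proof (intro exI conjI ballI allI)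
    fix S s
    show "M (restr S s) \<in> Some ` K \<union> {None}"
      using decode[of S s] by (cases "guess S s") (auto simp: M_def learner_restr)
  next
    fix S A assume S: "S \<in> LD sig K" and A: "A \<in> K"
    obtain B where B: "B \<in> K" "iso sig B S"
      using S iso_sym unfolding LD_def by blast
    have "infinite {n. M (restr S n) = Some A} \<longleftrightarrow> infinite {n. guess S n = Some (to_nat_on K A)}"
      using M_eq[OF A] by simp
    also have "\<dots> \<longleftrightarrow> iso sig A S"
    proof
      assume "infinite {n. guess S n = Some (to_nat_on K A)}"
      then have "to_nat_on K A = to_nat_on K B"
        using finite_guesses_of_other[OF dominant_if_iso[OF S B]] by blast
      then have "A = B" using A B K by (simp add: inj_on_eq_iff[OF inj_on_to_nat_on])
      then show "iso sig A S" using B by simp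
    next
      assume "iso sig A S"
      then show "infinite {n. guess S n = Some (to_nat_on K A)}"
        by (intro infinite_guesses_of_dominant dominant_if_iso S A)
    qed
    finally show "infinite {n. M (restr S n) = Some A} \<longleftrightarrow> iso sig A S" .
  qed
qed

end

locale E3_reduction = continuous_on_diagrams "LD sig K" \<Gamma>
  for sig :: "nat list" and K :: "diag set" and \<Gamma> :: "diag \<Rightarrow> nat \<Rightarrow> nat" +
  assumes family: "family sig K"
    and reduction: "\<And>S T. S \<in> LD sig K \<Longrightarrow> T \<in> LD sig K \<Longrightarrow> iso sig S T \<longleftrightarrow> E3 (\<Gamma> S) (\<Gamma> T)"
begin

definition code :: "nat \<Rightarrow> nat \<Rightarrow> nat" where
  "code i = \<Gamma> (from_nat_into K i)"

definition separating_column :: "nat \<Rightarrow> nat \<Rightarrow> nat" where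
  "separating_column i j = (SOME m. \<not> E0 (column (code i) m) (column (code j) m))"

definition beats :: "nat \<times> diag \<Rightarrow> nat \<Rightarrow> nat \<Rightarrow> bool" where
  "beats \<sigma> i j \<longleftrightarrow>
     disagreements \<sigma> (code i) (separating_column i j) < disagreements \<sigma> (code j) (separating_column j i)"

sublocale dominance_learner "to_nat_on K ` K" beats
  by unfold_locales (auto simp: beats_def)

lemma countable_K: "countable K"
  using family unfolding family_def by blast

lemma K_subset_LD: "K \<subseteq> LD sig K"
proof
  fix A assume "A \<in> K"
  moreover have "is_structure sig A" using family \<open>A \<in> K\<close> unfolding family_def by blast
  ultimately show "A \<in> LD sig K" unfolding LD_def using iso_refl[of sig A] by blast
qed

lemma code_to_nat_on: "A \<in> K \<Longrightarrow> code (to_nat_on K A) = \<Gamma> A"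
  unfolding code_def using countable_K by (simp add: from_nat_into_to_nat_on)

lemma not_E0_separating_column:
  assumes A: "A \<in> K" and B: "B \<in> K" and "A \<noteq> B"
  shows "\<not> E0 (column (\<Gamma> A) (separating_column (to_nat_on K A) (to_nat_on K B)))
               (column (\<Gamma> B) (separating_column (to_nat_on K A) (to_nat_on K B)))"
proof -
  have "\<not> iso sig A B" using family A B \<open>A \<noteq> B\<close> unfolding family_def by blast
  then have "\<not> E3 (\<Gamma> A) (\<Gamma> B)" using reduction A B K_subset_LD by blast
  then have "\<exists>m. \<not> E0 (column (code (to_nat_on K A)) m) (column (code (to_nat_on K B)) m)"
    unfolding E3_def code_to_nat_on[OF A] code_to_nat_on[OF B] by blast
  then show ?thesis
    unfolding separating_column_def code_to_nat_on[OF A, symmetric] code_to_nat_on[OF B, symmetric]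
    by (rule someI_ex)
qed

lemma dominant_if_iso:
  assumes S: "S \<in> LD sig K" and A: "A \<in> K" and "iso sig A S"
  shows "dominant S (to_nat_on K A)"
  unfolding dominant_def
proof (intro conjI ballI impI)
  show "to_nat_on K A \<in> to_nat_on K ` K" using A by simp
next
  fix j assume "j \<in> to_nat_on K ` K" and "j \<noteq> to_nat_on K A"
  then obtain B where B: "B \<in> K" and j: "j = to_nat_on K B" and "B \<noteq> A" by blast
  have E3: "E3 (\<Gamma> S) (\<Gamma> A)"
    using reduction S A K_subset_LD iso_sym \<open>iso sig A S\<close> by blast
  define m where "m = separating_column j (to_nat_on K A)"
  have "\<not> E0 (column (\<Gamma> B) m) (column (\<Gamma> A) m)"
    unfolding m_def j using not_E0_separating_column[OF B A \<open>B \<noteq> A\<close>] .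
  then have "\<not> E0 (column (\<Gamma> S) m) (column (\<Gamma> B) m)"
    using E3 E0_sym E0_trans unfolding E3_def by blast
  then show "\<forall>\<^sub>F s in sequentially. beats (restr S s) (to_nat_on K A) j"
    using eventually_disagreements_less[OF S] E3 unfolding beats_def E3_def m_def
    by (simp add: code_to_nat_on A B j)
qed

lemma PL_learnable_K: "PL_learnable sig K"
  by (rule PL_learnable_if_dominant[OF countable_K refl dominant_if_iso])

end

theorem mainTheorem15:
  fixes sig :: "nat list" and K :: "diag set"
  assumes "family sig K" and "E3_learnable sig K"
  shows "PL_learnable sig K"
proof -
  obtain \<Gamma> where "continuous_map (subtopology cantor_top (LD sig K)) baire_top \<Gamma>"
    and "\<forall>S\<in>LD sig K. \<forall>T\<in>LD sig K. iso sig S T \<longleftrightarrow> E3 (\<Gamma> S) (\<Gamma> T)"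
    using assms(2) unfolding E3_learnable_def by blast
  then interpret E3_reduction sig K \<Gamma>
    using assms(1) by unfold_locales blast+
  show ?thesis by (rule PL_learnable_K)
qed

end
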